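(* Let $(G,u,v,\alpha,\beta)$ be a Guvab with $\lim_{k\to\infty}W_k=0$ such that the sequence $\{W_{2k}\}_{k\ge0}$ is not eventually constant. Then there exist $0<\lambda_{\mathrm{even}}<1$ and $c>0$ such that $W_{2k}\sim c\cdot\lambda_{\mathrm{even}}^{2k}$ as $k\to\infty$.
   Context: A Guvab is a tuple $(G,u,v,\alpha,\beta)$ where $G$ is a finite, connected, simple graph, $u,v\in V(G)$, and $\alpha,\beta\in[0,1]$ with $\alpha\le\beta$. A random walk on $G$ with starting vertex $w$ and laziness $\gamma$ is the Markov chain $R_0=w$ and, for $i\ge1$, $R_i=R_{i-1}$ with probability $\gamma$ and $R_i=t$ with probability $\frac{1-\gamma}{\deg(R_{i-1})}$ for each neighbor $t$ of $R_{i-1}$. $\mu_k$ is the distribution after $k$ steps of the walk from $u$ with laziness $\alpha$, $\nu_k$ that of the walk from $v$ with laziness $\beta$, and $W_k=W(\mu_k,\nu_k)$ is the Wasserstein ($L^1$ optimal transport) distance with respect to the graph distance. A sequence $\{S_i\}$ is eventually constant if there is $N$ with $S_k=S_N$ for all $k\ge N$; $a_k\sim b_k$ means $a_k/b_k\to1$. *)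

theory Defs
  imports "HOL-Analysis.Analysis" "HOL-Library.Landau_Symbols"
begin

definition simple_graph :: "'a set \<Rightarrow> ('a \<Rightarrow> 'a \<Rightarrow> bool) \<Rightarrow> bool" where
  "simple_graph V E \<longleftrightarrow> finite V \<and> V \<noteq> {} \<and>
     (\<forall>x y. E x y \<longrightarrow> x \<in> V \<and> y \<in> V) \<and>
     (\<forall>x y. E x y \<longrightarrow> E y x) \<and> (\<forall>x. \<not> E x x)"

definition edge_rel :: "('a \<Rightarrow> 'a \<Rightarrow> bool) \<Rightarrow> ('a \<times> 'a) set" where
  "edge_rel E = {(x, y). E x y}"

definition connected_graph :: "'a set \<Rightarrow> ('a \<Rightarrow> 'a \<Rightarrow> bool) \<Rightarrow> bool" where
  "connected_graph V E \<longleftrightarrow> simple_graph V E \<and>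
     (\<forall>x\<in>V. \<forall>y\<in>V. (x, y) \<in> (edge_rel E)\<^sup>*)"

definition graph_dist :: "('a \<Rightarrow> 'a \<Rightarrow> bool) \<Rightarrow> 'a \<Rightarrow> 'a \<Rightarrow> nat" where
  "graph_dist E x y = (LEAST n. (x, y) \<in> (edge_rel E) ^^ n)"

definition deg :: "'a set \<Rightarrow> ('a \<Rightarrow> 'a \<Rightarrow> bool) \<Rightarrow> 'a \<Rightarrow> nat" where
  "deg V E x = card {y \<in> V. E x y}"

(* one-step transition probability of the lazy random walk with laziness g;
   (convention: a vertex without neighbours keeps all its mass) *)
definition trans_prob :: "'a set \<Rightarrow> ('a \<Rightarrow> 'a \<Rightarrow> bool) \<Rightarrow> real \<Rightarrow> 'a \<Rightarrow> 'a \<Rightarrow> real" where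
  "trans_prob V E g x y =
     (if x = y then (if deg V E x = 0 then 1 else g)
      else if E x y then (1 - g) / real (deg V E x) else 0)"

fun walk_dist :: "'a set \<Rightarrow> ('a \<Rightarrow> 'a \<Rightarrow> bool) \<Rightarrow> real \<Rightarrow> 'a \<Rightarrow> nat \<Rightarrow> 'a \<Rightarrow> real" where
  "walk_dist V E g w 0 = (\<lambda>y. if y = w then 1 else 0)"
| "walk_dist V E g w (Suc k) =
     (\<lambda>y. \<Sum>x\<in>V. walk_dist V E g w k x * trans_prob V E g x y)"

definition coupling :: "'a set \<Rightarrow> ('a \<Rightarrow> real) \<Rightarrow> ('a \<Rightarrow> real) \<Rightarrow> ('a \<Rightarrow> 'a \<Rightarrow> real) \<Rightarrow> bool" where
  "coupling V \<mu> \<nu> \<pi> \<longleftrightarrow>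
     (\<forall>x\<in>V. \<forall>y\<in>V. \<pi> x y \<ge> 0) \<and>
     (\<forall>x\<in>V. (\<Sum>y\<in>V. \<pi> x y) = \<mu> x) \<and>
     (\<forall>y\<in>V. (\<Sum>x\<in>V. \<pi> x y) = \<nu> y)"

definition wasserstein :: "'a set \<Rightarrow> ('a \<Rightarrow> 'a \<Rightarrow> bool) \<Rightarrow> ('a \<Rightarrow> real) \<Rightarrow> ('a \<Rightarrow> real) \<Rightarrow> real" where
  "wasserstein V E \<mu> \<nu> =
     Inf {c. \<exists>\<pi>. coupling V \<mu> \<nu> \<pi> \<and>
                 c = (\<Sum>x\<in>V. \<Sum>y\<in>V. \<pi> x y * real (graph_dist E x y))}"

definition guvab :: "'a set \<Rightarrow> ('a \<Rightarrow> 'a \<Rightarrow> bool) \<Rightarrow> 'a \<Rightarrow> 'a \<Rightarrow> real \<Rightarrow> real \<Rightarrow> bool" where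
  "guvab V E u v \<alpha> \<beta> \<longleftrightarrow> connected_graph V E \<and> u \<in> V \<and> v \<in> V \<and>
     0 \<le> \<alpha> \<and> \<alpha> \<le> \<beta> \<and> \<beta> \<le> 1"

definition W :: "'a set \<Rightarrow> ('a \<Rightarrow> 'a \<Rightarrow> bool) \<Rightarrow> 'a \<Rightarrow> 'a \<Rightarrow> real \<Rightarrow> real \<Rightarrow> nat \<Rightarrow> real" where
  "W V E u v \<alpha> \<beta> k = wasserstein V E (walk_dist V E \<alpha> u k) (walk_dist V E \<beta> v k)"

definition eventually_constant :: "(nat \<Rightarrow> 'b) \<Rightarrow> bool" where
  "eventually_constant S \<longleftrightarrow> (\<exists>N. \<forall>k\<ge>N. S k = S N)"

end

theory Submission
  imports Defs "HOL-Library.Function_Algebras" "HOL-Computational_Algebra.Fundamental_Theorem_Algebra"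
begin

text \<open>The transition kernel of a lazy walk is reversible, hence self-adjoint for a weighted inner
  product: its eigenvalues are real and it is diagonalisable. So the even-time distributions are
  finite sums \<open>\<Sum> c\<^sub>r r\<^sup>k\<close> with bases \<open>r = \<lambda>\<^sup>2 \<ge> 0\<close>. The distance \<open>W\<^sub>2\<^sub>k\<close> is the value of a
  transport linear program with these distributions as right-hand side; its optimum is attained at
  one of finitely many basic solutions, each linear in the right-hand side, so every candidate
  value and every feasibility condition is again such an exponential sum in \<open>k\<close>. These have
  eventually constant sign, hence eventually one fixed basic solution is optimal and \<open>W\<^sub>2\<^sub>k\<close> equals a
  single exponential sum. Its dominant term \<open>c q\<^sup>k\<close> has \<open>q < 1\<close> since \<open>W\<^sub>k \<rightarrow> 0\<close> and \<open>c > 0\<close>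
  since \<open>W\<^sub>k \<ge> 0\<close>; take \<open>\<lambda>\<^sub>e\<^sub>v\<^sub>e\<^sub>n = \<surd>q\<close>.\<close>

section \<open>Exponential sums with nonnegative bases\<close>

definition exp_sum :: "(nat \<Rightarrow> real) \<Rightarrow> bool" where
  "exp_sum s \<longleftrightarrow> (\<exists>R c. finite R \<and> R \<subseteq> {0..} \<and> (\<forall>k. s k = (\<Sum>r\<in>R. c r * r ^ k)))"

lemma exp_sumI:
  fixes b :: "'b \<Rightarrow> real"
  assumes "finite Z" "\<And>z. z \<in> Z \<Longrightarrow> 0 \<le> b z" "\<And>k. s k = (\<Sum>z\<in>Z. d z * b z ^ k)"
  shows "exp_sum s"
proof -
  define c where "c r = (\<Sum>z\<in>{z\<in>Z. b z = r}. d z)" for r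
  have "s k = (\<Sum>r\<in>b ` Z. c r * r ^ k)" for k
  proof -
    have "s k = (\<Sum>r\<in>b ` Z. \<Sum>z\<in>{z\<in>Z. b z = r}. d z * b z ^ k)"
      using assms(3) sum.image_gen[OF assms(1), of "\<lambda>z. d z * b z ^ k" b] by simp
    also have "\<dots> = (\<Sum>r\<in>b ` Z. c r * r ^ k)"
      unfolding c_def sum_distrib_right by (intro sum.cong refl) auto
    finally show ?thesis .
  qed
  moreover have "b ` Z \<subseteq> {0..}" using assms(2) by auto
  ultimately show ?thesis unfolding exp_sum_def using assms(1) by blast
qed

lemma exp_sum_zero: "exp_sum (\<lambda>k. 0)"
  unfolding exp_sum_def by (rule exI[of _ "{}"]) auto

lemma exp_sum_add:
  assumes "exp_sum s" "exp_sum t"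
  shows "exp_sum (\<lambda>k. s k + t k)"
proof -
  obtain R1 c1 where 1: "finite R1" "R1 \<subseteq> {0..}" "\<And>k. s k = (\<Sum>r\<in>R1. c1 r * r ^ k)"
    using assms(1) unfolding exp_sum_def by blast
  obtain R2 c2 where 2: "finite R2" "R2 \<subseteq> {0..}" "\<And>k. t k = (\<Sum>r\<in>R2. c2 r * r ^ k)"
    using assms(2) unfolding exp_sum_def by blast
  show ?thesis
    by (rule exp_sumI[where Z = "R1 <+> R2" and b = "case_sum id id" and d = "case_sum c1 c2"])
      (use 1 2 in \<open>auto simp: sum.Plus\<close>)
qed

lemma exp_sum_cmult:
  assumes "exp_sum s"
  shows "exp_sum (\<lambda>k. a * s k)"
proof -
  obtain R c where "finite R" "R \<subseteq> {0..}" "\<And>k. s k = (\<Sum>r\<in>R. c r * r ^ k)"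
    using assms unfolding exp_sum_def by blast
  then show ?thesis
    by (intro exp_sumI[where Z = R and b = id and d = "\<lambda>r. a * c r"]) (auto simp: sum_distrib_left mult.assoc)
qed

lemma exp_sum_diff: "exp_sum s \<Longrightarrow> exp_sum t \<Longrightarrow> exp_sum (\<lambda>k. s k - t k)"
  using exp_sum_add[of s "\<lambda>k. -1 * t k"] exp_sum_cmult[of t "-1"] by simp

lemma exp_sum_sum:
  "finite I \<Longrightarrow> (\<And>i. i \<in> I \<Longrightarrow> exp_sum (s i)) \<Longrightarrow> exp_sum (\<lambda>k. \<Sum>i\<in>I. s i k)"
  by (induction I rule: finite_induct) (auto intro: exp_sum_add exp_sum_zero)

lemma exp_sum_dominant_term:
  assumes "exp_sum s"
  shows "eventually (\<lambda>k. s k = 0) sequentially \<or>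
         (\<exists>m c. 0 < m \<and> c \<noteq> 0 \<and> (\<lambda>k. s k / m ^ k) \<longlonglongrightarrow> c)"
proof -
  obtain R c where R: "finite R" "R \<subseteq> {0..}" and s: "\<And>k. s k = (\<Sum>r\<in>R. c r * r ^ k)"
    using assms unfolding exp_sum_def by blast
  define R' where "R' = {r\<in>R. r > 0 \<and> c r \<noteq> 0}"
  show ?thesis
  proof (cases "R' = {}")
    case True
    have "c r * r ^ k = 0" if "r \<in> R" "k \<ge> 1" for r k
      using True that R(2) unfolding R'_def by (cases "r = 0") force+
    then have "\<forall>k\<ge>1. s k = 0" unfolding s by (auto intro: sum.neutral)
    then show ?thesis unfolding eventually_sequentially by blast
  next
    case False
    have "finite R'" using R unfolding R'_def by auto
    define m where "m = Max R'"
    have "m \<in> R'" unfolding m_def using False \<open>finite R'\<close> by simp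
    then have m: "m > 0" "c m \<noteq> 0" "m \<in> R" unfolding R'_def by auto
    have lim: "(\<lambda>k. c r * (r / m) ^ k) \<longlonglongrightarrow> (if r = m then c m else 0)" if "r \<in> R" for r
    proof (cases "r = m \<or> c r = 0")
      case True
      then show ?thesis using m by auto
    next
      case False
      have "r \<le> m" if "r > 0"
        using False that \<open>r \<in> R\<close> \<open>finite R'\<close> unfolding m_def R'_def by simp
      then have "\<bar>r / m\<bar> < 1" using False m R(2) \<open>r \<in> R\<close> by (cases "r = 0") auto
      then have "(\<lambda>k. c r * (r / m) ^ k) \<longlonglongrightarrow> c r * 0"
        by (intro tendsto_mult tendsto_const LIMSEQ_power_zero) simp
      then show ?thesis using False by simp
    qed
    have "(\<lambda>k. \<Sum>r\<in>R. c r * (r / m) ^ k) \<longlonglongrightarrow> (\<Sum>r\<in>R. if r = m then c m else 0)"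
      by (rule tendsto_sum) (rule lim)
    moreover have "(\<Sum>r\<in>R. if r = m then c m else 0) = c m" using m R by simp
    moreover have "s k / m ^ k = (\<Sum>r\<in>R. c r * (r / m) ^ k)" for k
      unfolding s sum_divide_distrib by (simp add: power_divide)
    ultimately have "(\<lambda>k. s k / m ^ k) \<longlonglongrightarrow> c m" by simp
    then show ?thesis using m by blast
  qed
qed

lemma exp_sum_eventually_sign:
  assumes "exp_sum s"
  obtains "eventually (\<lambda>k. s k = 0) sequentially" | "eventually (\<lambda>k. s k > 0) sequentially"
    | "eventually (\<lambda>k. s k < 0) sequentially"
proof -
  have "eventually (\<lambda>k. s k > 0) sequentially \<or> eventually (\<lambda>k. s k < 0) sequentially"
    if m: "m > 0" and c: "c \<noteq> 0" and lim: "(\<lambda>k. s k / m ^ k) \<longlonglongrightarrow> c" for m c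
  proof (cases "c > 0")
    case True
    then have "eventually (\<lambda>k. s k / m ^ k > 0) sequentially" by (rule order_tendstoD(1)[OF lim])
    then have "eventually (\<lambda>k. s k > 0) sequentially"
      by (rule eventually_mono) (use m in \<open>simp add: zero_less_divide_iff\<close>)
    then show ?thesis ..
  next
    case False
    with c have "c < 0" by simp
    then have "eventually (\<lambda>k. s k / m ^ k < 0) sequentially" by (rule order_tendstoD(2)[OF lim])
    then have "eventually (\<lambda>k. s k < 0) sequentially"
      by (rule eventually_mono) (use m in \<open>simp add: divide_less_0_iff\<close>)
    then show ?thesis ..
  qed
  then show thesis using exp_sum_dominant_term[OF assms] that by blast
qed

definition eventually_decided :: "(nat \<Rightarrow> bool) \<Rightarrow> bool" where
  "eventually_decided P \<longleftrightarrow> eventually P sequentially \<or> eventually (\<lambda>k. \<not> P k) sequentially"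

lemma eventually_decidedI:
  assumes "eventually Q sequentially" "(\<forall>k. Q k \<longrightarrow> P k) \<or> (\<forall>k. Q k \<longrightarrow> \<not> P k)"
  shows "eventually_decided P"
  using assms(2)
proof
  assume "\<forall>k. Q k \<longrightarrow> P k"
  then have "eventually P sequentially" by (intro eventually_mono[OF assms(1)]) simp
  then show ?thesis unfolding eventually_decided_def ..
next
  assume "\<forall>k. Q k \<longrightarrow> \<not> P k"
  then have "eventually (\<lambda>k. \<not> P k) sequentially" by (intro eventually_mono[OF assms(1)]) simp
  then show ?thesis unfolding eventually_decided_def ..
qed

lemma eventually_decided_nonneg: "exp_sum s \<Longrightarrow> eventually_decided (\<lambda>k. 0 \<le> s k)"
  by (erule exp_sum_eventually_sign; erule eventually_decidedI) auto

lemma eventually_decided_zero: "exp_sum s \<Longrightarrow> eventually_decided (\<lambda>k. s k = 0)"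
  by (erule exp_sum_eventually_sign; erule eventually_decidedI) auto

lemma eventually_decided_conj:
  assumes "eventually_decided P" "eventually_decided Q"
  shows "eventually_decided (\<lambda>k. P k \<and> Q k)"
proof (cases "eventually P sequentially \<and> eventually Q sequentially")
  case True
  then show ?thesis unfolding eventually_decided_def by (intro disjI1 eventually_conj) auto
next
  case False
  then have "eventually (\<lambda>k. \<not> P k) sequentially \<or> eventually (\<lambda>k. \<not> Q k) sequentially"
    using assms unfolding eventually_decided_def by blast
  then have "eventually (\<lambda>k. \<not> (P k \<and> Q k)) sequentially"
    by (elim disjE) (erule eventually_mono, simp)+
  then show ?thesis unfolding eventually_decided_def ..
qed

lemma eventually_decided_ball:
  assumes "finite A" "\<And>a. a \<in> A \<Longrightarrow> eventually_decided (P a)"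
  shows "eventually_decided (\<lambda>k. \<forall>a\<in>A. P a k)"
proof (cases "\<forall>a\<in>A. eventually (P a) sequentially")
  case True
  then show ?thesis
    unfolding eventually_decided_def by (intro disjI1 eventually_ball_finite[OF assms(1)]) auto
next
  case False
  then obtain a where a: "a \<in> A" "\<not> eventually (P a) sequentially" by blast
  then have "eventually (\<lambda>k. \<not> P a k) sequentially"
    using assms(2)[OF a(1)] unfolding eventually_decided_def by simp
  then have "eventually (\<lambda>k. \<not> (\<forall>a\<in>A. P a k)) sequentially"
    by (rule eventually_mono) (use a(1) in blast)
  then show ?thesis unfolding eventually_decided_def ..
qed

lemma exp_sum_eventually_least:
  assumes "finite F" "F \<noteq> {}" "\<And>S. S \<in> F \<Longrightarrow> exp_sum (g S)"
  shows "\<exists>S0\<in>F. eventually (\<lambda>k. \<forall>S\<in>F. g S0 k \<le> g S k) sequentially"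
  using assms
proof (induction F rule: finite_ne_induct)
  case (singleton S)
  then show ?case by simp
next
  case (insert S F)
  then obtain S0 where S0: "S0 \<in> F" "eventually (\<lambda>k. \<forall>S\<in>F. g S0 k \<le> g S k) sequentially"
    by auto
  have "eventually_decided (\<lambda>k. 0 \<le> g S0 k - g S k)"
    using insert.prems S0(1) by (intro eventually_decided_nonneg exp_sum_diff) auto
  then consider "eventually (\<lambda>k. g S k \<le> g S0 k) sequentially"
    | "eventually (\<lambda>k. g S0 k < g S k) sequentially"
    unfolding eventually_decided_def by (auto simp: not_le)
  then show ?case
  proof cases
    case 1
    with S0(2) have "eventually (\<lambda>k. \<forall>S'\<in>insert S F. g S k \<le> g S' k) sequentially"
      by eventually_elim auto
    then show ?thesis by blast
  next
    case 2
    with S0(2) have "eventually (\<lambda>k. \<forall>S'\<in>insert S F. g S0 k \<le> g S' k) sequentially"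
      by eventually_elim auto
    then show ?thesis using S0(1) by blast
  qed
qed

lemma exp_sum_eventually_Min:
  assumes "finite F" "\<And>k. \<exists>S\<in>F. P S k"
    and "\<And>S. S \<in> F \<Longrightarrow> exp_sum (g S)" "\<And>S. S \<in> F \<Longrightarrow> eventually_decided (P S)"
  shows "\<exists>S\<in>F. eventually (\<lambda>k. Min ((\<lambda>S. g S k) ` {S\<in>F. P S k}) = g S k) sequentially"
proof -
  define F' where "F' = {S\<in>F. eventually (P S) sequentially}"
  have "eventually (\<lambda>k. P S k \<longleftrightarrow> S \<in> F') sequentially" if "S \<in> F" for S
  proof (cases "S \<in> F'")
    case True
    then have "eventually (P S) sequentially" unfolding F'_def by simp
    then show ?thesis by (rule eventually_mono) (use True in simp)
  next
    case False
    then have "eventually (\<lambda>k. \<not> P S k) sequentially"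
      using assms(4)[OF that] that unfolding F'_def eventually_decided_def by simp
    then show ?thesis by (rule eventually_mono) (use False in simp)
  qed
  then have "eventually (\<lambda>k. \<forall>S\<in>F. P S k \<longleftrightarrow> S \<in> F') sequentially"
    by (intro eventually_ball_finite[OF assms(1)]) blast
  then have F': "eventually (\<lambda>k. {S\<in>F. P S k} = F') sequentially"
    by (rule eventually_mono) (auto simp: F'_def)
  then obtain k where "{S\<in>F. P S k} = F'" unfolding eventually_sequentially by blast
  with assms(2)[of k] have "F' \<noteq> {}" by blast
  moreover have "finite F'" using assms(1) unfolding F'_def by simp
  ultimately obtain S0 where S0: "S0 \<in> F'" "eventually (\<lambda>k. \<forall>S\<in>F'. g S0 k \<le> g S k) sequentially"
    using exp_sum_eventually_least[of F' g] assms(3) unfolding F'_def by blast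
  from F' S0(2) have "eventually (\<lambda>k. Min ((\<lambda>S. g S k) ` {S\<in>F. P S k}) = g S0 k) sequentially"
  proof eventually_elim
    case (elim k)
    then show ?case using S0(1) \<open>finite F'\<close> by (intro Min_eqI) auto
  qed
  then show ?thesis using S0(1) unfolding F'_def by blast
qed

lemma exp_sum_asymp_equiv:
  assumes "exp_sum s" "s \<longlonglongrightarrow> 0" "eventually (\<lambda>k. 0 \<le> s k) sequentially"
    and "\<not> eventually (\<lambda>k. s k = 0) sequentially"
  shows "\<exists>m c. 0 < m \<and> m < 1 \<and> 0 < c \<and> s \<sim>[at_top] (\<lambda>k. c * m ^ k)"
proof -
  obtain m c where m: "m > 0" and c: "c \<noteq> 0" and lim: "(\<lambda>k. s k / m ^ k) \<longlonglongrightarrow> c"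
    using exp_sum_dominant_term[OF assms(1)] assms(4) by blast
  have "m < 1"
  proof (rule ccontr)
    assume "\<not> m < 1"
    then have "\<bar>s k / m ^ k\<bar> \<le> \<bar>s k\<bar>" for k
      by (simp add: abs_divide divide_le_eq_1 mult_le_cancel_left1 divide_le_eq abs_mult one_le_power)
    then have "(\<lambda>k. s k / m ^ k) \<longlonglongrightarrow> 0"
      by (intro Lim_null_comparison[OF _ assms(2)[THEN tendsto_rabs_zero]] always_eventually) auto
    with lim c show False using LIMSEQ_unique by blast
  qed
  have "0 \<le> c"
    by (intro tendsto_lowerbound[OF lim] eventually_mono[OF assms(3)]) (use m in simp)+
  with c have "c > 0" by simp
  have "(\<lambda>k. s k / m ^ k / c) \<longlonglongrightarrow> c / c" by (intro tendsto_divide lim tendsto_const) (use c in simp)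
  then have "(\<lambda>k. s k / (c * m ^ k)) \<longlonglongrightarrow> 1" using c by (simp add: field_simps)
  then have "s \<sim>[at_top] (\<lambda>k. c * m ^ k)" by (intro asymp_equivI')
  then show ?thesis using m \<open>m < 1\<close> \<open>c > 0\<close> by blast
qed

lemma eventually_exp_sum_asymp_equiv:
  assumes "exp_sum s" "eventually (\<lambda>k. t k = s k) sequentially" "t \<longlonglongrightarrow> 0"
    and "\<And>k. 0 \<le> t k" "\<not> eventually (\<lambda>k. t k = 0) sequentially"
  shows "\<exists>m c. 0 < m \<and> m < 1 \<and> 0 < c \<and> t \<sim>[at_top] (\<lambda>k. c * m ^ k)"
proof -
  have "s \<longlonglongrightarrow> 0" using assms(3,2) by (rule Lim_transform_eventually)
  moreover have "eventually (\<lambda>k. 0 \<le> s k) sequentially"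
    using assms(2) by (rule eventually_mono) (metis assms(4))
  moreover have "\<not> eventually (\<lambda>k. s k = 0) sequentially"
  proof
    assume "eventually (\<lambda>k. s k = 0) sequentially"
    with assms(2) have "eventually (\<lambda>k. t k = 0) sequentially" by eventually_elim simp
    with assms(5) show False ..
  qed
  ultimately obtain m c where "0 < m" "m < 1" "0 < c" and "s \<sim>[at_top] (\<lambda>k. c * m ^ k)"
    using exp_sum_asymp_equiv[OF assms(1)] by blast
  moreover have "t \<sim>[at_top] s" using assms(2) by (rule asymp_equiv_refl_ev)
  ultimately show ?thesis using asymp_equiv_trans by blast
qed

section \<open>Linear programs and their basic solutions\<close>

lemma sum_fun_apply: "(\<Sum>i\<in>A. f i) x = (\<Sum>i\<in>A. f i x)"
  by (induction A rule: infinite_finite_induct) auto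

abbreviation (input) fun_scale :: "'c::times \<Rightarrow> ('i \<Rightarrow> 'c) \<Rightarrow> 'i \<Rightarrow> 'c" where
  "fun_scale c f \<equiv> (\<lambda>i. c * f i)"

interpretation fun_vs: vector_space "fun_scale :: 'c::field \<Rightarrow> ('i \<Rightarrow> 'c) \<Rightarrow> _"
  by unfold_locales (auto simp: fun_eq_iff algebra_simps)

interpretation fun_vs_pair: vector_space_pair
  "fun_scale :: 'c::field \<Rightarrow> ('i \<Rightarrow> 'c) \<Rightarrow> _" "fun_scale :: 'c \<Rightarrow> ('j \<Rightarrow> 'c) \<Rightarrow> _"
  by unfold_locales

definition supported_in :: "'i set \<Rightarrow> ('i \<Rightarrow> 'b::zero) set" where
  "supported_in S = {f. \<forall>i. i \<notin> S \<longrightarrow> f i = 0}"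

lemma subspace_supported_in: "fun_vs.subspace (supported_in S)"
  unfolding fun_vs.subspace_def supported_in_def by auto

lemma exp_sum_linear_image:
  fixes G :: "('j \<Rightarrow> real) \<Rightarrow> 'i \<Rightarrow> real"
  assumes "Vector_Spaces.linear fun_scale fun_scale G" "finite J"
    and "\<And>k. b k \<in> supported_in J" "\<And>j. j \<in> J \<Longrightarrow> exp_sum (\<lambda>k. b k j)"
  shows "exp_sum (\<lambda>k. G (b k) p)"
proof -
  define \<delta> :: "'j \<Rightarrow> 'j \<Rightarrow> real" where "\<delta> j = (\<lambda>j'. if j' = j then 1 else 0)" for j
  have b: "b k = (\<Sum>j\<in>J. fun_scale (b k j) (\<delta> j))" for k
  proof
    fix j'
    show "b k j' = (\<Sum>j\<in>J. fun_scale (b k j) (\<delta> j)) j'"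
      using assms(2) assms(3)[of k] unfolding supported_in_def sum_fun_apply \<delta>_def
      by (cases "j' \<in> J") (simp_all add: if_distrib cong: if_cong)
  qed
  have "G (b k) = (\<Sum>j\<in>J. fun_scale (b k j) (G (\<delta> j)))" for k
    by (subst b) (simp add: fun_vs_pair.linear_sum[OF assms(1)] fun_vs_pair.linear_scale[OF assms(1)])
  then have "G (b k) p = (\<Sum>j\<in>J. G (\<delta> j) p * b k j)" for k
    by (simp add: sum_fun_apply mult.commute)
  then show ?thesis
    using assms(2,4) by (simp add: exp_sum_sum exp_sum_cmult)
qed

lemma ratio_test:
  fixes x d :: "'i \<Rightarrow> real"
  assumes "finite S" "\<And>i. 0 \<le> x i" "i0 \<in> S" "d i0 < 0"
  obtains t p where "0 \<le> t" "p \<in> S" "x p + t * d p = 0" "\<And>i. i \<in> S \<Longrightarrow> 0 \<le> x i + t * d i"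
proof -
  define N where "N = {i\<in>S. d i < 0}"
  have "finite N" "i0 \<in> N" using assms unfolding N_def by auto
  define t where "t = Min ((\<lambda>i. x i / - d i) ` N)"
  have "t \<in> (\<lambda>i. x i / - d i) ` N"
    unfolding t_def by (rule Min_in) (use \<open>finite N\<close> \<open>i0 \<in> N\<close> in auto)
  then obtain p where p: "p \<in> N" "t = x p / - d p" by blast
  have "0 \<le> t" using p assms(2)[of p] unfolding N_def by (simp add: divide_nonneg_neg)
  have "0 \<le> x i + t * d i" if "i \<in> S" for i
  proof (cases "d i < 0")
    case True
    then have "i \<in> N" using that unfolding N_def by simp
    then have "t \<le> x i / - d i" unfolding t_def using \<open>finite N\<close> by simp
    moreover have "0 < - d i" using True by simp
    ultimately have "t * - d i \<le> x i" by (metis pos_le_divide_eq)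
    then show ?thesis by simp
  next
    case False
    then show ?thesis using assms(2)[of i] \<open>0 \<le> t\<close> by simp
  qed
  moreover have "x p + t * d p = 0" using p unfolding N_def by simp
  ultimately show thesis using that \<open>0 \<le> t\<close> p(1) unfolding N_def by blast
qed

locale finite_lp =
  fixes I :: "'i set" and J :: "'j set"
    and A :: "('i \<Rightarrow> real) \<Rightarrow> 'j \<Rightarrow> real" and w :: "'i \<Rightarrow> real"
  assumes finite_I: "finite I" and finite_J: "finite J"
    and linear_A: "Vector_Spaces.linear fun_scale fun_scale A"
    and A_supported: "A x \<in> supported_in J"
    and w_nonneg: "i \<in> I \<Longrightarrow> 0 \<le> w i"
begin

definition feasible :: "('j \<Rightarrow> real) \<Rightarrow> ('i \<Rightarrow> real) \<Rightarrow> bool" where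
  "feasible b x \<longleftrightarrow> x \<in> supported_in I \<and> (\<forall>i\<in>I. 0 \<le> x i) \<and> A x = b"

definition cost :: "('i \<Rightarrow> real) \<Rightarrow> real" where
  "cost x = (\<Sum>i\<in>I. w i * x i)"

definition lp_value :: "('j \<Rightarrow> real) \<Rightarrow> real" where
  "lp_value b = Inf (cost ` {x. feasible b x})"

definition bases :: "'i set set" where
  "bases = {S. S \<subseteq> I \<and> inj_on A (supported_in S)}"

text \<open>For a basis \<open>S\<close>, the solution of \<open>A x = b\<close> supported in \<open>S\<close> (if any) is taken from a
  linear left inverse of \<open>A\<close>, so that it depends linearly on \<open>b\<close> for every \<open>b\<close>.\<close>
definition basic_solution :: "'i set \<Rightarrow> ('j \<Rightarrow> real) \<Rightarrow> 'i \<Rightarrow> real" where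
  "basic_solution S = (SOME G. G ` UNIV \<subseteq> supported_in S \<and>
     Vector_Spaces.linear fun_scale fun_scale G \<and> (\<forall>x\<in>supported_in S. G (A x) = x))"

lemma basic_solution:
  assumes "S \<in> bases"
  shows basic_solution_supported: "basic_solution S b \<in> supported_in S"
    and linear_basic_solution: "Vector_Spaces.linear fun_scale fun_scale (basic_solution S)"
    and basic_solution_A: "x \<in> supported_in S \<Longrightarrow> basic_solution S (A x) = x"
proof -
  have "inj_on A (supported_in S)" using assms unfolding bases_def by blast
  from someI_ex[OF fun_vs_pair.linear_exists_left_inverse_on[OF linear_A subspace_supported_in this]]
  show "basic_solution S b \<in> supported_in S" "Vector_Spaces.linear fun_scale fun_scale (basic_solution S)"
    "x \<in> supported_in S \<Longrightarrow> basic_solution S (A x) = x"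
    unfolding basic_solution_def by blast+
qed

lemma finite_bases: "finite bases"
  unfolding bases_def by (rule finite_subset[of _ "Pow I"]) (use finite_I in auto)

lemma cost_nonneg: "feasible b x \<Longrightarrow> 0 \<le> cost x"
  unfolding feasible_def cost_def by (auto intro!: sum_nonneg mult_nonneg_nonneg w_nonneg)

lemma cost_add_scaled: "cost (\<lambda>i. x i + t * d i) = cost x + t * cost d"
  unfolding cost_def by (simp add: distrib_left sum.distrib sum_distrib_left mult.left_commute)

lemma A_add_scaled: "A (\<lambda>i. x i + t * d i) = (\<lambda>j. A x j + t * A d j)"
  using fun_vs_pair.linear_add[OF linear_A, of x "fun_scale t d"]
    fun_vs_pair.linear_scale[OF linear_A, of t d]
  by (simp add: plus_fun_def)

lemma cost_negative_imp_negative_entry: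
  assumes "d \<in> supported_in I" "cost d < 0"
  shows "\<exists>i. d i < 0"
proof (rule ccontr)
  assume "\<not> (\<exists>i. d i < 0)"
  then have "0 \<le> cost d" unfolding cost_def by (auto intro!: sum_nonneg mult_nonneg_nonneg w_nonneg simp: not_less)
  with assms(2) show False by simp
qed

lemma descent_direction:
  assumes "S \<subseteq> I" "\<not> inj_on A (supported_in S)"
  obtains d where "d \<in> supported_in S" "A d = 0" "cost d \<le> 0" "\<exists>i. d i < 0"
proof -
  obtain d0 where d0: "d0 \<in> supported_in S" "A d0 = 0" "d0 \<noteq> 0"
    using assms(2) unfolding fun_vs_pair.linear_inj_on_iff_eq_0[OF linear_A subspace_supported_in]
    by blast
  define d1 where "d1 = (\<lambda>i. (-1) * d0 i)"
  have d1: "d1 \<in> supported_in S" "A d1 = 0" "cost d1 = - cost d0"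
    using d0 fun_vs_pair.linear_scale[OF linear_A, of "-1" d0] unfolding d1_def
    by (auto simp: supported_in_def cost_def sum_negf zero_fun_def)
  have "supported_in S \<subseteq> supported_in I" using assms(1) unfolding supported_in_def by blast
  show thesis
  proof (cases "cost d0 \<le> 0 \<and> (\<exists>i. d0 i < 0)")
    case True
    then show thesis using that d0 by blast
  next
    case False
    have "cost d1 \<le> 0 \<and> (\<exists>i. d1 i < 0)"
    proof (cases "cost d0 \<le> 0")
      case True
      with False have nonneg: "\<forall>i. 0 \<le> d0 i" by (auto simp: not_less)
      then have "0 \<le> cost d0" unfolding cost_def by (auto intro!: sum_nonneg mult_nonneg_nonneg w_nonneg)
      moreover obtain i where "d0 i \<noteq> 0" using d0(3) by (auto simp: fun_eq_iff)
      with nonneg have "d1 i < 0" unfolding d1_def by (simp add: order.not_eq_order_implies_strict)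
      ultimately show ?thesis using True d1(3) by auto
    next
      case False
      then show ?thesis
        using d1 cost_negative_imp_negative_entry[of d1] \<open>supported_in S \<subseteq> supported_in I\<close> by auto
    qed
    then show thesis using that d1 by blast
  qed
qed


lemma support_reduction:
  assumes x: "feasible b x"
    and d: "d \<in> supported_in {i\<in>I. x i \<noteq> 0}" "A d = 0" "cost d \<le> 0" "d i0 < 0"
  obtains x' where "feasible b x'" "cost x' \<le> cost x" "{i\<in>I. x' i \<noteq> 0} \<subset> {i\<in>I. x i \<noteq> 0}"
proof -
  define S where "S = {i\<in>I. x i \<noteq> 0}"
  have x_I: "x \<in> supported_in I" "\<forall>i\<in>I. 0 \<le> x i" "A x = b"
    using x unfolding feasible_def by auto
  have x_S: "x i = 0" if "i \<notin> S" for i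
    using that x_I(1) unfolding S_def supported_in_def by auto
  have d_S: "d i = 0" if "i \<notin> S" for i
    using that d(1) unfolding S_def supported_in_def by simp
  have x_nonneg: "0 \<le> x i" for i
    using x_I(2) x_S[of i] by (cases "i \<in> S") (auto simp: S_def)
  have "i0 \<in> S" using d(4) d_S[of i0] by force
  have "finite S" using finite_I unfolding S_def by simp
  obtain t p where t: "0 \<le> t" "p \<in> S" "x p + t * d p = 0"
    "\<And>i. i \<in> S \<Longrightarrow> 0 \<le> x i + t * d i"
    using ratio_test[of S x i0 d, OF \<open>finite S\<close> x_nonneg \<open>i0 \<in> S\<close> d(4)] by blast
  define x' where "x' = (\<lambda>i. x i + t * d i)"
  have "0 \<le> x' i" for i
    using t(4)[of i] x_S[of i] d_S[of i] unfolding x'_def by (cases "i \<in> S") auto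
  moreover have "x' \<in> supported_in I"
    using x_S d_S unfolding x'_def supported_in_def S_def by auto
  moreover have "A x' = b" using x_I(3) d(2) unfolding x'_def A_add_scaled by simp
  ultimately have "feasible b x'" unfolding feasible_def by blast
  moreover have "cost x' \<le> cost x"
    unfolding x'_def cost_add_scaled using t(1) d(3) by (simp add: mult_nonneg_nonpos)
  moreover have "{i\<in>I. x' i \<noteq> 0} \<subset> S"
  proof -
    have "i \<in> S" if "x' i \<noteq> 0" for i
      using that x_S[of i] d_S[of i] unfolding x'_def by (cases "i \<in> S") auto
    then have "{i\<in>I. x' i \<noteq> 0} \<subseteq> S" by blast
    moreover have "x' p = 0" using t(3) unfolding x'_def .
    ultimately show ?thesis using t(2) by blast
  qed
  ultimately show thesis by (rule that[unfolded S_def[symmetric]])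
qed

theorem exists_basic_solution_le:
  assumes "feasible b x"
  shows "\<exists>S\<in>bases. feasible b (basic_solution S b) \<and> cost (basic_solution S b) \<le> cost x"
  using assms
proof (induction "card {i\<in>I. x i \<noteq> 0}" arbitrary: x rule: less_induct)
  case less
  define S where "S = {i\<in>I. x i \<noteq> 0}"
  have "x \<in> supported_in S" using less.prems unfolding feasible_def supported_in_def S_def by auto
  show ?case
  proof (cases "inj_on A (supported_in S)")
    case True
    then have "S \<in> bases" unfolding bases_def S_def by blast
    moreover have "basic_solution S b = x"
      using basic_solution_A[OF \<open>S \<in> bases\<close> \<open>x \<in> supported_in S\<close>] less.prems
      unfolding feasible_def by simp
    ultimately show ?thesis using less.prems by auto
  next
    case False
    obtain d i0 where "d \<in> supported_in S" "A d = 0" "cost d \<le> 0" "d i0 < 0"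
      using descent_direction[of S] False unfolding S_def by blast
    then obtain x' where x': "feasible b x'" "cost x' \<le> cost x" "{i\<in>I. x' i \<noteq> 0} \<subset> S"
      using support_reduction[OF less.prems] unfolding S_def by blast
    have "card {i\<in>I. x' i \<noteq> 0} < card S"
      using x'(3) finite_I unfolding S_def by (intro psubset_card_mono) auto
    then obtain S' where "S' \<in> bases" "feasible b (basic_solution S' b)"
      "cost (basic_solution S' b) \<le> cost x'"
      using less.hyps x'(1) unfolding S_def by blast
    then show ?thesis using x'(2) by force
  qed
qed


lemma lp_value_eq_Min:
  assumes "feasible b x"
  shows "lp_value b = Min ((\<lambda>S. cost (basic_solution S b)) ` {S\<in>bases. feasible b (basic_solution S b)})"
    (is "_ = Min ?M")
proof -
  have "finite ?M" using finite_bases by simp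
  have "?M \<subseteq> cost ` {x. feasible b x}" by blast
  have below: "\<exists>m\<in>?M. m \<le> c" if "c \<in> cost ` {x. feasible b x}" for c
    using that exists_basic_solution_le by fastforce
  then have "?M \<noteq> {}" using assms by blast
  show ?thesis unfolding lp_value_def
  proof (rule cInf_eq_minimum)
    show "Min ?M \<in> cost ` {x. feasible b x}"
      using Min_in[OF \<open>finite ?M\<close> \<open>?M \<noteq> {}\<close>] \<open>?M \<subseteq> _\<close> by blast
    show "Min ?M \<le> c" if "c \<in> cost ` {x. feasible b x}" for c
      using below[OF that] Min_le[OF \<open>finite ?M\<close>] order_trans by blast
  qed
qed

lemma lp_value_nonneg: "feasible b x \<Longrightarrow> 0 \<le> lp_value b"
  unfolding lp_value_def by (rule cInf_greatest) (auto intro: cost_nonneg)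

lemma feasible_basic_solution_iff:
  assumes "S \<in> bases" "b \<in> supported_in J"
  shows "feasible b (basic_solution S b) \<longleftrightarrow>
    (\<forall>i\<in>I. 0 \<le> basic_solution S b i) \<and> (\<forall>j\<in>J. A (basic_solution S b) j - b j = 0)"
proof -
  have "basic_solution S b \<in> supported_in I"
    using basic_solution_supported[OF assms(1)] assms(1) unfolding bases_def supported_in_def by blast
  moreover have "A (basic_solution S b) = b \<longleftrightarrow> (\<forall>j\<in>J. A (basic_solution S b) j - b j = 0)"
    using A_supported[of "basic_solution S b"] assms(2) unfolding supported_in_def fun_eq_iff by auto
  ultimately show ?thesis unfolding feasible_def by blast
qed

lemma eventually_decided_feasible_basic:
  assumes "S \<in> bases" "\<And>k. b k \<in> supported_in J" "\<And>j. j \<in> J \<Longrightarrow> exp_sum (\<lambda>k. b k j)"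
  shows "eventually_decided (\<lambda>k. feasible (b k) (basic_solution S (b k)))"
proof -
  note lin = linear_basic_solution[OF assms(1)]
  have "exp_sum (\<lambda>k. basic_solution S (b k) i)" for i
    by (rule exp_sum_linear_image[OF lin finite_J assms(2,3)])
  moreover have "exp_sum (\<lambda>k. A (basic_solution S (b k)) j)" for j
    using exp_sum_linear_image[OF Vector_Spaces.linear_compose[OF lin linear_A] finite_J assms(2,3)]
    by simp
  ultimately show ?thesis
    unfolding feasible_basic_solution_iff[OF assms(1,2)]
    by (intro eventually_decided_conj eventually_decided_ball finite_I finite_J
        eventually_decided_nonneg eventually_decided_zero exp_sum_diff assms(3))
qed

theorem lp_value_eventually_exp_sum:
  assumes "\<And>k. \<exists>x. feasible (b k) x"
    and "\<And>k. b k \<in> supported_in J" "\<And>j. j \<in> J \<Longrightarrow> exp_sum (\<lambda>k. b k j)"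
  shows "\<exists>s. exp_sum s \<and> eventually (\<lambda>k. lp_value (b k) = s k) sequentially"
proof -
  define P where "P S k \<longleftrightarrow> feasible (b k) (basic_solution S (b k))" for S k
  define g where "g S k = cost (basic_solution S (b k))" for S k
  have exp_sum_g: "exp_sum (g S)" if "S \<in> bases" for S
    unfolding g_def cost_def
    using finite_I finite_J assms(2,3)
    by (intro exp_sum_sum exp_sum_cmult exp_sum_linear_image[OF linear_basic_solution[OF that]]) auto
  moreover have "\<exists>S\<in>bases. P S k" for k
    using assms(1) exists_basic_solution_le unfolding P_def by blast
  moreover have "eventually_decided (P S)" if "S \<in> bases" for S
    unfolding P_def by (rule eventually_decided_feasible_basic[OF that assms(2,3)])
  ultimately obtain S where "S \<in> bases"
    and "eventually (\<lambda>k. Min ((\<lambda>S. g S k) ` {S\<in>bases. P S k}) = g S k) sequentially"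
    using exp_sum_eventually_Min[OF finite_bases, of P g] by blast
  moreover have "lp_value (b k) = Min ((\<lambda>S. g S k) ` {S\<in>bases. P S k})" for k
    using assms(1) lp_value_eq_Min unfolding P_def g_def by blast
  ultimately show ?thesis using exp_sum_g by auto
qed

end

section \<open>Spectral decomposition of a reversible kernel\<close>

lemma linear_recurrence_closed_form:
  fixes u :: "nat \<Rightarrow> 'b::field"
  assumes "a \<notin> Z" "\<And>k. u (Suc k) = a * u k + (\<Sum>z\<in>Z. z ^ k * c z)"
  shows "u k = a ^ k * (u 0 - (\<Sum>z\<in>Z. c z / (z - a))) + (\<Sum>z\<in>Z. z ^ k * (c z / (z - a)))"
proof (induction k)
  case 0
  then show ?case by simp
next
  case (Suc k)
  have "z * (z ^ k * (c z / (z - a))) = a * (z ^ k * (c z / (z - a))) + z ^ k * c z" if "z \<in> Z" for z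
    using that assms(1) by (cases "z = a") (auto simp: field_simps)
  then have "(\<Sum>z\<in>Z. z ^ Suc k * (c z / (z - a)))
      = a * (\<Sum>z\<in>Z. z ^ k * (c z / (z - a))) + (\<Sum>z\<in>Z. z ^ k * c z)"
    by (simp add: sum_distrib_left sum.distrib mult.assoc cong: sum.cong)
  then show ?case unfolding assms(2) Suc by (simp add: algebra_simps)
qed

lemma dependent_if_card_gt:
  fixes S :: "('i \<Rightarrow> 'c::field) set"
  assumes "finite V" "S \<subseteq> supported_in V" "card V < card S"
  shows "fun_vs.dependent S"
proof (rule ccontr)
  assume "fun_vs.independent S"
  define e :: "'i \<Rightarrow> 'i \<Rightarrow> 'c" where "e x = (\<lambda>y. if y = x then 1 else 0)" for x
  have "S \<subseteq> fun_vs.span (e ` V)"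
  proof
    fix g assume "g \<in> S"
    then have "g = (\<Sum>x\<in>V. fun_scale (g x) (e x))"
      using assms(1,2) unfolding supported_in_def e_def fun_eq_iff sum_fun_apply
      by (auto simp: if_distrib cong: if_cong)
    moreover have "(\<Sum>x\<in>V. fun_scale (g x) (e x)) \<in> fun_vs.span (e ` V)"
      by (intro fun_vs.span_sum fun_vs.span_scale fun_vs.span_base) auto
    ultimately show "g \<in> fun_vs.span (e ` V)" by simp
  qed
  then have "card S \<le> card (e ` V)"
    using fun_vs.independent_span_bound \<open>fun_vs.independent S\<close> assms(1) by blast
  also have "\<dots> \<le> card V" by (rule card_image_le[OF assms(1)])
  finally show False using assms(3) by simp
qed

lemma split_linear_factor:
  fixes p :: "complex poly"
  assumes "p \<noteq> 0" "degree p \<noteq> 0"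
  shows "\<exists>a q. p = [:-a, 1:] * q \<and> q \<noteq> 0 \<and> degree q < degree p"
proof -
  have "\<not> constant (poly p)" using assms(2) constant_degree[of p] by simp
  then obtain a where "poly p a = 0" using fundamental_theorem_of_algebra by blast
  then obtain q where p: "p = [:-a, 1:] * q" by (metis dvdE poly_eq_0_iff_dvd)
  with assms(1) have "q \<noteq> 0" by auto
  have "degree p = degree [:-a, 1:] + degree q" unfolding p using \<open>q \<noteq> 0\<close> by (intro degree_mult_eq) auto
  with p \<open>q \<noteq> 0\<close> show ?thesis by auto
qed

text \<open>\<open>\<omega>\<close> is the reciprocal of a reversing measure of \<open>K\<close>; it is the weight for which the action
  of \<open>K\<close> on measures is self-adjoint.\<close>
locale reversible_kernel =
  fixes V :: "'a set" and K :: "'a \<Rightarrow> 'a \<Rightarrow> real" and \<omega> :: "'a \<Rightarrow> real"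
  assumes finite_V: "finite V"
    and weight_pos: "x \<in> V \<Longrightarrow> 0 < \<omega> x"
    and detailed_balance: "x \<in> V \<Longrightarrow> y \<in> V \<Longrightarrow> K x y * \<omega> y = K y x * \<omega> x"
begin

definition evolve :: "('a \<Rightarrow> complex) \<Rightarrow> 'a \<Rightarrow> complex" where
  "evolve f = (\<lambda>y. if y \<in> V then (\<Sum>x\<in>V. f x * of_real (K x y)) else 0)"

lemma evolve_supported: "evolve f \<in> supported_in V"
  unfolding evolve_def supported_in_def by auto

lemma evolve_add: "evolve (\<lambda>y. f y + g y) = (\<lambda>y. evolve f y + evolve g y)"
  unfolding evolve_def by (auto simp: distrib_right sum.distrib)

lemma evolve_scale: "evolve (\<lambda>y. a * f y) = (\<lambda>y. a * evolve f y)"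
  unfolding evolve_def by (auto simp: sum_distrib_left mult.assoc)

lemma evolve_diff: "evolve (\<lambda>y. f y - g y) = (\<lambda>y. evolve f y - evolve g y)"
  unfolding evolve_def by (auto simp: left_diff_distrib sum_subtractf)

lemma evolve_zero: "evolve (\<lambda>y. 0) = (\<lambda>y. 0)"
  unfolding evolve_def by auto

text \<open>\<open>poly_evolve p f\<close> is \<open>p(T) f\<close> for the operator \<open>T = evolve\<close>, by Horner's scheme.\<close>
definition poly_evolve :: "complex poly \<Rightarrow> ('a \<Rightarrow> complex) \<Rightarrow> 'a \<Rightarrow> complex" where
  "poly_evolve p f = foldr (\<lambda>a g y. a * f y + evolve g y) (coeffs p) (\<lambda>y. 0)"

lemma poly_evolve_0 [simp]: "poly_evolve 0 f = (\<lambda>y. 0)"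
  unfolding poly_evolve_def by simp

lemma poly_evolve_pCons: "poly_evolve (pCons a p) f = (\<lambda>y. a * f y + evolve (poly_evolve p f) y)"
proof (cases "p = 0 \<and> a = 0")
  case True
  then show ?thesis by (simp add: evolve_zero)
next
  case False
  then have "coeffs (pCons a p) = a # coeffs p" by (auto simp: cCons_def)
  then show ?thesis unfolding poly_evolve_def by simp
qed

lemma poly_evolve_supported: "f \<in> supported_in V \<Longrightarrow> poly_evolve p f \<in> supported_in V"
  by (induction p rule: pCons_induct) (auto simp: poly_evolve_pCons supported_in_def evolve_def)

lemma poly_evolve_add: "poly_evolve (p + q) f = (\<lambda>y. poly_evolve p f y + poly_evolve q f y)"
proof (induction p q rule: poly_induct2)
  case (pCons a p b q)
  show ?case unfolding add_pCons poly_evolve_pCons pCons evolve_add by (simp add: algebra_simps)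
qed simp

lemma poly_evolve_smult: "poly_evolve (smult a p) f = (\<lambda>y. a * poly_evolve p f y)"
proof (induction p rule: pCons_induct)
  case (pCons b p)
  show ?case unfolding smult_pCons poly_evolve_pCons pCons evolve_scale by (simp add: algebra_simps)
qed simp

lemma poly_evolve_mult: "poly_evolve (p * q) f = poly_evolve p (poly_evolve q f)"
proof (induction p rule: pCons_induct)
  case (pCons a p)
  show ?case unfolding mult_pCons_left poly_evolve_add poly_evolve_smult poly_evolve_pCons pCons
    by simp
qed simp

lemma poly_evolve_const: "poly_evolve [:c:] f = (\<lambda>y. c * f y)"
  by (simp add: poly_evolve_pCons evolve_zero)

lemma poly_evolve_linear_factor: "poly_evolve [:-a, 1:] f = (\<lambda>y. evolve f y - a * f y)"
  by (simp add: poly_evolve_pCons poly_evolve_const evolve_zero)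

lemma poly_evolve_monom: "poly_evolve (monom c i) f = (\<lambda>y. c * (evolve ^^ i) f y)"
proof (induction i)
  case 0
  then show ?case by (simp add: monom_0 poly_evolve_const)
next
  case (Suc i)
  show ?case unfolding monom_Suc poly_evolve_pCons Suc by (simp add: evolve_scale)
qed

lemma poly_evolve_sum: "poly_evolve (\<Sum>i\<in>I. p i) f = (\<lambda>y. \<Sum>i\<in>I. poly_evolve (p i) f y)"
  by (induction I rule: infinite_finite_induct) (auto simp: poly_evolve_add)

lemma poly_evolve_diff: "poly_evolve (p - q) f = (\<lambda>y. poly_evolve p f y - poly_evolve q f y)"
proof -
  have "poly_evolve (p - q) f = poly_evolve (p + smult (-1) q) f" by simp
  then show ?thesis unfolding poly_evolve_add poly_evolve_smult by simp
qed

definition inner_w :: "('a \<Rightarrow> complex) \<Rightarrow> ('a \<Rightarrow> complex) \<Rightarrow> complex" where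
  "inner_w f g = (\<Sum>x\<in>V. cnj (f x) * g x * of_real (\<omega> x))"

lemma inner_w_evolve: "inner_w (evolve f) g = inner_w f (evolve g)"
proof -
  have "inner_w (evolve f) g = (\<Sum>y\<in>V. \<Sum>x\<in>V. cnj (f x) * g y * of_real (K x y * \<omega> y))"
    unfolding inner_w_def evolve_def by (simp add: sum_distrib_left sum_distrib_right mult_ac)
  also have "\<dots> = (\<Sum>x\<in>V. \<Sum>y\<in>V. cnj (f x) * g y * of_real (K y x * \<omega> x))"
    by (subst sum.swap) (simp add: detailed_balance)
  also have "\<dots> = inner_w f (evolve g)"
    unfolding inner_w_def evolve_def by (simp add: sum_distrib_left sum_distrib_right mult_ac)
  finally show ?thesis .
qed

lemma inner_w_self_eq_0:
  assumes "f \<in> supported_in V" "inner_w f f = 0"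
  shows "f = (\<lambda>y. 0)"
proof -
  have "inner_w f f = of_real (\<Sum>x\<in>V. (cmod (f x))\<^sup>2 * \<omega> x)"
    unfolding inner_w_def of_real_sum
    by (intro sum.cong refl) (simp add: complex_norm_square[symmetric] mult.commute)
  with assms(2) have "complex_of_real (\<Sum>x\<in>V. (cmod (f x))\<^sup>2 * \<omega> x) = 0" by (simp only:)
  then have "(\<Sum>x\<in>V. (cmod (f x))\<^sup>2 * \<omega> x) = 0" by (simp only: of_real_eq_0_iff)
  moreover have "0 \<le> (cmod (f x))\<^sup>2 * \<omega> x" if "x \<in> V" for x
    using weight_pos[OF that] by simp
  ultimately have "\<forall>x\<in>V. (cmod (f x))\<^sup>2 * \<omega> x = 0"
    using sum_nonneg_eq_0_iff[OF finite_V, of "\<lambda>x. (cmod (f x))\<^sup>2 * \<omega> x"] by simp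
  then have "\<forall>x\<in>V. f x = 0" using weight_pos by (metis less_irrefl mult_eq_0_iff norm_eq_zero zero_eq_power2)
  then show ?thesis using assms(1) unfolding supported_in_def by auto
qed

lemma inner_w_scale_left: "inner_w (\<lambda>y. a * f y) g = cnj a * inner_w f g"
  unfolding inner_w_def by (simp add: sum_distrib_left mult_ac)

lemma inner_w_scale_right: "inner_w f (\<lambda>y. a * g y) = a * inner_w f g"
  unfolding inner_w_def by (simp add: sum_distrib_left mult_ac)

lemma inner_w_diff_left: "inner_w (\<lambda>y. f y - g y) h = inner_w f h - inner_w g h"
  unfolding inner_w_def by (simp add: sum_subtractf algebra_simps)

lemma inner_w_diff_right: "inner_w h (\<lambda>y. f y - g y) = inner_w h f - inner_w h g"
  unfolding inner_w_def by (simp add: sum_subtractf algebra_simps)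

lemma eigenvalue_real:
  assumes "f \<in> supported_in V" "f \<noteq> (\<lambda>y. 0)" "evolve f = (\<lambda>y. a * f y)"
  shows "cnj a = a"
proof -
  have "inner_w f f \<noteq> 0" using inner_w_self_eq_0 assms(1,2) by blast
  moreover have "cnj a * inner_w f f = a * inner_w f f"
    using inner_w_evolve[of f f] unfolding assms(3) inner_w_scale_left inner_w_scale_right .
  ultimately show ?thesis by simp
qed

lemma linear_factor_square_annihilates:
  assumes "f \<in> supported_in V" "cnj a = a"
    and "poly_evolve [:-a, 1:] (poly_evolve [:-a, 1:] f) = (\<lambda>y. 0)"
  shows "poly_evolve [:-a, 1:] f = (\<lambda>y. 0)"
proof -
  define h where "h = poly_evolve [:-a, 1:] f"
  have "inner_w h h = inner_w f (poly_evolve [:-a, 1:] h)"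
    unfolding h_def poly_evolve_linear_factor inner_w_diff_left inner_w_diff_right
      inner_w_scale_left inner_w_scale_right inner_w_evolve evolve_diff evolve_scale
    using assms(2) by (simp add: algebra_simps)
  also have "\<dots> = 0" using assms(3) unfolding h_def inner_w_def by simp
  finally show ?thesis
    using inner_w_self_eq_0 poly_evolve_supported[OF assms(1)] unfolding h_def by blast
qed


lemma poly_evolve_one: "poly_evolve 1 f = f"
  using poly_evolve_const[of 1 f] by (simp add: one_pCons)

lemma iterate_evolve_supported: "f \<in> supported_in V \<Longrightarrow> (evolve ^^ k) f \<in> supported_in V"
  by (induction k) (auto simp: evolve_supported)

lemma iterate_evolve_scale: "(evolve ^^ k) (\<lambda>y. a * f y) = (\<lambda>y. a * (evolve ^^ k) f y)"
  by (induction k) (auto simp: evolve_scale)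

lemma iterate_evolve_diff: "(evolve ^^ k) (\<lambda>y. f y - g y) = (\<lambda>y. (evolve ^^ k) f y - (evolve ^^ k) g y)"
  by (induction k) (auto simp: evolve_diff)

lemma iterate_evolve_zero: "(evolve ^^ k) (\<lambda>y. 0) = (\<lambda>y. 0)"
  by (induction k) (auto simp: evolve_zero)

lemma exists_annihilating_poly:
  assumes "f \<in> supported_in V"
  shows "\<exists>p. p \<noteq> 0 \<and> poly_evolve p f = (\<lambda>y. 0)"
proof (cases "inj_on (\<lambda>i. (evolve ^^ i) f) {0..card V}")
  case False
  then obtain i j where ij: "i \<noteq> j" "(evolve ^^ i) f = (evolve ^^ j) f" unfolding inj_on_def by blast
  define p where "p = monom (1::complex) i - monom 1 j"
  have "coeff p i = 1" using ij by (simp add: p_def)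
  moreover have "poly_evolve p f = (\<lambda>y. 0)" unfolding p_def poly_evolve_diff poly_evolve_monom using ij by simp
  ultimately show ?thesis by (intro exI[of _ p]) auto
next
  case True
  define S where "S = (\<lambda>i. (evolve ^^ i) f) ` {0..card V}"
  have "S \<subseteq> supported_in V" unfolding S_def using iterate_evolve_supported[OF assms] by blast
  moreover have "card S = Suc (card V)" unfolding S_def using card_image[OF True] by simp
  ultimately have "fun_vs.dependent S" by (intro dependent_if_card_gt[OF finite_V]) auto
  then obtain T c where T: "finite T" "T \<subseteq> S" "(\<Sum>g\<in>T. fun_scale (c g) g) = 0"
    and "\<exists>g\<in>T. c g \<noteq> 0"
    unfolding fun_vs.dependent_explicit by blast
  define I where "I = {i\<in>{0..card V}. (evolve ^^ i) f \<in> T}"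
  have T_I: "T = (\<lambda>i. (evolve ^^ i) f) ` I" using T(2) unfolding I_def S_def by auto
  have inj: "inj_on (\<lambda>i. (evolve ^^ i) f) I" using True by (rule inj_on_subset) (auto simp: I_def)
  define p where "p = (\<Sum>i\<in>I. monom (c ((evolve ^^ i) f)) i)"
  have "poly_evolve p f = (\<lambda>y. \<Sum>i\<in>I. c ((evolve ^^ i) f) * (evolve ^^ i) f y)"
    unfolding p_def poly_evolve_sum poly_evolve_monom ..
  also have "\<dots> = (\<lambda>y. \<Sum>g\<in>T. c g * g y)"
    unfolding T_I by (subst sum.reindex[OF inj]) simp
  also have "\<dots> = (\<lambda>y. 0)" using T(3) unfolding fun_eq_iff sum_fun_apply by simp
  finally have "poly_evolve p f = (\<lambda>y. 0)" .
  moreover obtain i0 where "i0 \<in> I" "c ((evolve ^^ i0) f) \<noteq> 0"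
    using \<open>\<exists>g\<in>T. c g \<noteq> 0\<close> unfolding T_I by blast
  moreover have "coeff p i0 = c ((evolve ^^ i0) f)"
    using \<open>i0 \<in> I\<close> unfolding p_def coeff_sum coeff_monom by (simp add: I_def)
  ultimately show ?thesis by (intro exI[of _ p]) auto
qed

lemma annihilator_insert_real_root:
  assumes "f \<in> supported_in V" "finite Z" "cnj a = a"
    and "poly_evolve ((\<Prod>z\<in>Z. [:-z, 1:]) * [:-a, 1:]) f = (\<lambda>y. 0)"
  shows "poly_evolve (\<Prod>z\<in>insert a Z. [:-z, 1:]) f = (\<lambda>y. 0)"
proof (cases "a \<in> Z")
  case False
  then show ?thesis using assms(2,4) by (simp add: mult.commute)
next
  case True
  define h where "h = poly_evolve (\<Prod>z\<in>Z-{a}. [:-z, 1:]) f"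
  have split: "(\<Prod>z\<in>Z. [:-z, 1:]) = [:-a, 1:] * (\<Prod>z\<in>Z-{a}. [:-z, 1:])"
    using True assms(2) by (simp add: prod.remove)
  have "poly_evolve [:-a, 1:] (poly_evolve [:-a, 1:] h) = (\<lambda>y. 0)"
    using assms(4) unfolding h_def poly_evolve_mult[symmetric] split by (simp add: mult_ac)
  then have "poly_evolve [:-a, 1:] h = (\<lambda>y. 0)"
    using linear_factor_square_annihilates poly_evolve_supported[OF assms(1)] assms(3)
    unfolding h_def by blast
  then show ?thesis unfolding insert_absorb[OF True] split poly_evolve_mult h_def .
qed

lemma annihilating_root_real:
  assumes "f \<in> supported_in V" "poly_evolve ([:-a, 1:] * q) f = (\<lambda>y. 0)"
    and "poly_evolve q f \<noteq> (\<lambda>y. 0)"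
  shows "cnj a = a"
proof -
  have "poly_evolve [:-a, 1:] (poly_evolve q f) = (\<lambda>y. 0)"
    using assms(2) unfolding poly_evolve_mult .
  then have "evolve (poly_evolve q f) = (\<lambda>y. a * poly_evolve q f y)"
    unfolding poly_evolve_linear_factor by (auto simp: fun_eq_iff)
  then show ?thesis using eigenvalue_real poly_evolve_supported[OF assms(1)] assms(3) by blast
qed

lemma exists_real_squarefree_annihilator:
  assumes "p \<noteq> 0" "f \<in> supported_in V" "poly_evolve p f = (\<lambda>y. 0)"
  shows "\<exists>Z. finite Z \<and> (\<forall>z\<in>Z. cnj z = z) \<and> poly_evolve (\<Prod>z\<in>Z. [:-z, 1:]) f = (\<lambda>y. 0)"
  using assms
proof (induction "degree p" arbitrary: p f rule: less_induct)
  case less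
  show ?case
  proof (cases "degree p = 0")
    case True
    then obtain c where "p = [:c:]" "c \<noteq> 0" using less.prems(1) by (metis degree_0_id pCons_0_0)
    then have "f = (\<lambda>y. 0)" using less.prems(3) by (auto simp: poly_evolve_const fun_eq_iff)
    then show ?thesis by (intro exI[of _ "{}"]) (simp add: poly_evolve_one)
  next
    case False
    then obtain a q where p: "p = [:-a, 1:] * q" and "q \<noteq> 0" "degree q < degree p"
      using split_linear_factor less.prems(1) by blast
    have "poly_evolve q (poly_evolve [:-a, 1:] f) = (\<lambda>y. 0)"
      using less.prems(3) unfolding p poly_evolve_mult[symmetric] by (simp add: mult.commute)
    then obtain Z where Z: "finite Z" "\<forall>z\<in>Z. cnj z = z"
      "poly_evolve ((\<Prod>z\<in>Z. [:-z, 1:]) * [:-a, 1:]) f = (\<lambda>y. 0)"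
      using less.hyps[OF \<open>degree q < degree p\<close> \<open>q \<noteq> 0\<close>] poly_evolve_supported[OF less.prems(2)]
      unfolding poly_evolve_mult by blast
    show ?thesis
    proof (cases "poly_evolve q f = (\<lambda>y. 0)")
      case True
      then show ?thesis using less.hyps[OF \<open>degree q < degree p\<close> \<open>q \<noteq> 0\<close> less.prems(2)] by blast
    next
      case False
      then have "cnj a = a" using annihilating_root_real less.prems(2,3) unfolding p by blast
      then show ?thesis
        using annihilator_insert_real_root[OF less.prems(2) Z(1) _ Z(3)] Z(1,2) by auto
    qed
  qed
qed

lemma annihilated_iterates_exp_sum:
  assumes "finite Z" "f \<in> supported_in V" "poly_evolve (\<Prod>z\<in>Z. [:-z, 1:]) f = (\<lambda>y. 0)"
  shows "\<exists>w. \<forall>k y. (evolve ^^ k) f y = (\<Sum>z\<in>Z. z ^ k * w z y)"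
  using assms
proof (induction Z arbitrary: f rule: finite_induct)
  case empty
  then have "f = (\<lambda>y. 0)" by (simp add: poly_evolve_one)
  then show ?case by (simp add: iterate_evolve_zero)
next
  case (insert a Z f)
  define g where "g = poly_evolve [:-a, 1:] f"
  have "poly_evolve (\<Prod>z\<in>Z. [:-z, 1:]) g = (\<lambda>y. 0)"
    using insert.prems(2) insert.hyps unfolding g_def poly_evolve_mult[symmetric]
    by (simp add: mult.commute)
  then obtain w where w: "\<And>k y. (evolve ^^ k) g y = (\<Sum>z\<in>Z. z ^ k * w z y)"
    using insert.IH poly_evolve_supported[OF insert.prems(1)] unfolding g_def by blast
  have "(evolve ^^ Suc k) f y = a * (evolve ^^ k) f y + (\<Sum>z\<in>Z. z ^ k * w z y)" for k y
  proof -
    have "(evolve ^^ k) g y = (evolve ^^ Suc k) f y - a * (evolve ^^ k) f y"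
      unfolding g_def poly_evolve_linear_factor iterate_evolve_diff iterate_evolve_scale
      by (simp add: funpow_Suc_right del: funpow.simps)
    then show ?thesis using w[of k y] by (simp add: algebra_simps)
  qed
  then have closed: "(evolve ^^ k) f y = a ^ k * (f y - (\<Sum>z\<in>Z. w z y / (z - a)))
      + (\<Sum>z\<in>Z. z ^ k * (w z y / (z - a)))" for k y
    using linear_recurrence_closed_form[of a Z "\<lambda>k. (evolve ^^ k) f y"] insert.hyps(2) by simp
  define w' where "w' z = (if z = a then (\<lambda>y. f y - (\<Sum>z\<in>Z. w z y / (z - a)))
    else (\<lambda>y. w z y / (z - a)))" for z
  have "(\<Sum>z\<in>Z. z ^ k * w' z y) = (\<Sum>z\<in>Z. z ^ k * (w z y / (z - a)))" for k y
    using insert.hyps(2) by (intro sum.cong refl) (auto simp: w'_def)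
  then have "(evolve ^^ k) f y = (\<Sum>z\<in>insert a Z. z ^ k * w' z y)" for k y
    using insert.hyps closed[of k y] by (simp add: w'_def)
  then show ?case by blast
qed

theorem spectral_decomposition:
  assumes "f \<in> supported_in V"
  shows "\<exists>Z w. finite Z \<and> (\<forall>z\<in>Z. cnj z = z) \<and> (\<forall>k y. (evolve ^^ k) f y = (\<Sum>z\<in>Z. z ^ k * w z y))"
proof -
  obtain p where "p \<noteq> 0" "poly_evolve p f = (\<lambda>y. 0)"
    using exists_annihilating_poly[OF assms] by blast
  then obtain Z where Z: "finite Z" "\<forall>z\<in>Z. cnj z = z"
    and "poly_evolve (\<Prod>z\<in>Z. [:-z, 1:]) f = (\<lambda>y. 0)"
    using exists_real_squarefree_annihilator[OF _ assms] by blast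
  with annihilated_iterates_exp_sum[OF Z(1) assms] show ?thesis using Z by blast
qed

lemma even_iterates_exp_sum:
  assumes "f \<in> supported_in V"
  shows "exp_sum (\<lambda>k. Re ((evolve ^^ (2 * k)) f y))"
proof -
  obtain Z w where Z: "finite Z" "\<forall>z\<in>Z. cnj z = z"
    and w: "\<And>k y. (evolve ^^ k) f y = (\<Sum>z\<in>Z. z ^ k * w z y)"
    using spectral_decomposition[OF assms] by blast
  have "Re (z ^ (2 * k) * w z y) = Re (w z y) * ((Re z)\<^sup>2) ^ k" if "z \<in> Z" for z k
  proof -
    have "z = of_real (Re z)" using Z(2) that by (simp add: complex_eq_iff)
    then have "z ^ (2 * k) = of_real (((Re z)\<^sup>2) ^ k)" by (metis of_real_power power_mult)
    then show ?thesis by simp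
  qed
  then have "Re ((evolve ^^ (2 * k)) f y) = (\<Sum>z\<in>Z. Re (w z y) * ((Re z)\<^sup>2) ^ k)" for k
    unfolding w Re_sum by simp
  then show ?thesis by (intro exp_sumI[OF Z(1)]) auto
qed

end

section \<open>Lazy random walks\<close>

lemma simple_graph_finite: "simple_graph V E \<Longrightarrow> finite V"
  unfolding simple_graph_def by blast

lemma deg_pos:
  assumes "simple_graph V E" "E x y"
  shows "0 < deg V E x"
proof -
  have "y \<in> {y\<in>V. E x y}" using assms unfolding simple_graph_def by blast
  moreover have "finite {y\<in>V. E x y}" using simple_graph_finite[OF assms(1)] by simp
  ultimately show ?thesis unfolding deg_def by (auto simp: card_gt_0_iff)
qed

lemma trans_prob_nonneg: "0 \<le> g \<Longrightarrow> g \<le> 1 \<Longrightarrow> 0 \<le> trans_prob V E g x y"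
  unfolding trans_prob_def by auto

lemma trans_prob_sum:
  assumes "simple_graph V E" "x \<in> V"
  shows "(\<Sum>y\<in>V. trans_prob V E g x y) = 1"
proof -
  have fin: "finite V" and irrefl: "\<not> E x x"
    using assms(1) unfolding simple_graph_def by auto
  have "(\<Sum>y\<in>V - {x}. trans_prob V E g x y) = (\<Sum>y\<in>{y\<in>V. E x y}. (1 - g) / real (deg V E x))"
    unfolding trans_prob_def using fin irrefl by (intro sum.mono_neutral_cong_right) auto
  also have "\<dots> = real (deg V E x) * ((1 - g) / real (deg V E x))"
    by (simp add: deg_def)
  finally show ?thesis
    using sum.remove[OF fin assms(2), of "trans_prob V E g x"]
    by (cases "deg V E x = 0") (auto simp: trans_prob_def)
qed

lemma walk_dist_nonneg: "0 \<le> g \<Longrightarrow> g \<le> 1 \<Longrightarrow> 0 \<le> walk_dist V E g w k y"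
  by (induction k arbitrary: y) (auto intro!: sum_nonneg mult_nonneg_nonneg trans_prob_nonneg)

lemma walk_dist_sum:
  assumes "simple_graph V E" "w \<in> V"
  shows "(\<Sum>y\<in>V. walk_dist V E g w k y) = 1"
proof (induction k)
  case 0
  then show ?case using assms(2) simple_graph_finite[OF assms(1)] by simp
next
  case (Suc k)
  have "(\<Sum>y\<in>V. walk_dist V E g w (Suc k) y)
      = (\<Sum>x\<in>V. walk_dist V E g w k x * (\<Sum>y\<in>V. trans_prob V E g x y))"
    by (simp add: sum_distrib_left) (rule sum.swap)
  also have "\<dots> = (\<Sum>x\<in>V. walk_dist V E g w k x)" using trans_prob_sum[OF assms(1)] by simp
  finally show ?case using Suc by simp
qed

text \<open>The degree is a reversing measure of the walk (\<open>max 1\<close> only matters at isolated vertices).\<close>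
lemma reversible_kernel_walk:
  assumes "simple_graph V E"
  shows "reversible_kernel V (trans_prob V E g) (\<lambda>x. 1 / real (max 1 (deg V E x)))"
proof
  show "finite V" using simple_graph_finite[OF assms] .
  show "0 < 1 / real (max 1 (deg V E x))" for x by simp
  fix x y assume "x \<in> V" "y \<in> V"
  have sym: "E x y \<longleftrightarrow> E y x" using assms unfolding simple_graph_def by blast
  show "trans_prob V E g x y * (1 / real (max 1 (deg V E y))) =
        trans_prob V E g y x * (1 / real (max 1 (deg V E x)))"
  proof (cases "x \<noteq> y \<and> E x y")
    case True
    then have "0 < deg V E x" "0 < deg V E y" using deg_pos[OF assms] sym by blast+
    then show ?thesis using True sym unfolding trans_prob_def by (auto simp: max_def)
  next
    case False
    then show ?thesis using sym unfolding trans_prob_def by auto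
  qed
qed

lemma walk_dist_even_exp_sum:
  assumes "simple_graph V E" "w \<in> V" "y \<in> V"
  shows "exp_sum (\<lambda>k. walk_dist V E g w (2 * k) y)"
proof -
  interpret reversible_kernel V "trans_prob V E g" "\<lambda>x. 1 / real (max 1 (deg V E x))"
    by (rule reversible_kernel_walk[OF assms(1)])
  define f where "f = (\<lambda>y. if y = w then 1 else 0 :: complex)"
  have "complex_of_real (walk_dist V E g w k y) = (evolve ^^ k) f y" if "y \<in> V" for k y
    using that
  proof (induction k arbitrary: y)
    case 0
    then show ?case by (simp add: f_def)
  next
    case (Suc k)
    then show ?case by (simp add: evolve_def)
  qed
  then have "walk_dist V E g w (2 * k) y = Re ((evolve ^^ (2 * k)) f y)" for k
    using assms(3) by (metis Re_complex_of_real)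
  moreover have "f \<in> supported_in V" using assms(2) unfolding f_def supported_in_def by simp
  ultimately show ?thesis using even_iterates_exp_sum by simp
qed

lemma coupling_product:
  assumes "\<And>x. x \<in> V \<Longrightarrow> 0 \<le> \<mu> x" "\<And>y. y \<in> V \<Longrightarrow> 0 \<le> \<nu> y"
    and "(\<Sum>x\<in>V. \<mu> x) = 1" "(\<Sum>y\<in>V. \<nu> y) = 1"
  shows "coupling V \<mu> \<nu> (\<lambda>x y. \<mu> x * \<nu> y)"
  using assms unfolding coupling_def by (simp add: sum_distrib_left[symmetric] sum_distrib_right[symmetric])

section \<open>The Wasserstein distance as a linear program\<close>

text \<open>The coupling constraints: \<open>Inl a\<close> indexes the row sum at \<open>a\<close>, \<open>Inr b\<close> the column sum at \<open>b\<close>.\<close>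
definition marginals :: "'a set \<Rightarrow> ('a \<times> 'a \<Rightarrow> real) \<Rightarrow> 'a + 'a \<Rightarrow> real" where
  "marginals V x = case_sum (\<lambda>a. if a \<in> V then \<Sum>b\<in>V. x (a, b) else 0)
                            (\<lambda>b. if b \<in> V then \<Sum>a\<in>V. x (a, b) else 0)"

definition marginal_data :: "'a set \<Rightarrow> ('a \<Rightarrow> real) \<Rightarrow> ('a \<Rightarrow> real) \<Rightarrow> 'a + 'a \<Rightarrow> real" where
  "marginal_data V \<mu> \<nu> = case_sum (\<lambda>a. if a \<in> V then \<mu> a else 0) (\<lambda>b. if b \<in> V then \<nu> b else 0)"

lemma linear_marginals: "Vector_Spaces.linear fun_scale fun_scale (marginals V)"
  unfolding Vector_Spaces.linear_iff
  by (auto simp: fun_vs.vector_space_axioms marginals_def fun_eq_iff sum.distrib sum_distrib_left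
      split: sum.split)

lemma marginals_supported: "marginals V x \<in> supported_in (V <+> V)"
  unfolding marginals_def supported_in_def by (auto split: sum.split)

locale finite_graph_transport =
  fixes V :: "'a set" and E :: "'a \<Rightarrow> 'a \<Rightarrow> bool"
  assumes finite_V: "finite V"

sublocale finite_graph_transport \<subseteq>
  transport: finite_lp "V \<times> V" "V <+> V" "marginals V" "\<lambda>(a, b). real (graph_dist E a b)"
  by (rule finite_lp.intro) (use finite_V linear_marginals marginals_supported in auto)

context finite_graph_transport
begin

lemma feasible_of_coupling:
  assumes "coupling V \<mu> \<nu> \<pi>"
  defines "x \<equiv> \<lambda>(a, b). if (a, b) \<in> V \<times> V then \<pi> a b else 0"
  shows "transport.feasible (marginal_data V \<mu> \<nu>) x"
    and "transport.cost x = (\<Sum>a\<in>V. \<Sum>b\<in>V. \<pi> a b * real (graph_dist E a b))"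
proof -
  show "transport.feasible (marginal_data V \<mu> \<nu>) x"
    using assms(1) unfolding transport.feasible_def coupling_def x_def supported_in_def
      marginals_def marginal_data_def
    by (auto simp: fun_eq_iff split: sum.split)
  show "transport.cost x = (\<Sum>a\<in>V. \<Sum>b\<in>V. \<pi> a b * real (graph_dist E a b))"
    unfolding transport.cost_def x_def sum.cartesian_product by (intro sum.cong) auto
qed

lemma coupling_of_feasible:
  assumes "transport.feasible (marginal_data V \<mu> \<nu>) x"
  shows "coupling V \<mu> \<nu> (\<lambda>a b. x (a, b))"
    and "transport.cost x = (\<Sum>a\<in>V. \<Sum>b\<in>V. x (a, b) * real (graph_dist E a b))"
proof -
  have x: "\<forall>i\<in>V \<times> V. 0 \<le> x i" "marginals V x = marginal_data V \<mu> \<nu>"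
    using assms unfolding transport.feasible_def by auto
  have "(\<Sum>b\<in>V. x (a, b)) = \<mu> a" if "a \<in> V" for a
    using fun_cong[OF x(2), of "Inl a"] that by (simp add: marginals_def marginal_data_def)
  moreover have "(\<Sum>a\<in>V. x (a, b)) = \<nu> b" if "b \<in> V" for b
    using fun_cong[OF x(2), of "Inr b"] that by (simp add: marginals_def marginal_data_def)
  ultimately show "coupling V \<mu> \<nu> (\<lambda>a b. x (a, b))"
    using x(1) unfolding coupling_def by simp
  show "transport.cost x = (\<Sum>a\<in>V. \<Sum>b\<in>V. x (a, b) * real (graph_dist E a b))"
    unfolding transport.cost_def sum.cartesian_product by (intro sum.cong) auto
qed

lemma wasserstein_eq_lp_value:
  "wasserstein V E \<mu> \<nu> = transport.lp_value (marginal_data V \<mu> \<nu>)"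
proof -
  have "{c. \<exists>\<pi>. coupling V \<mu> \<nu> \<pi> \<and> c = (\<Sum>a\<in>V. \<Sum>b\<in>V. \<pi> a b * real (graph_dist E a b))}
      = transport.cost ` {x. transport.feasible (marginal_data V \<mu> \<nu>) x}" (is "?C = ?F")
  proof (intro equalityI subsetI)
    fix c assume "c \<in> ?C"
    then obtain \<pi> where \<pi>: "coupling V \<mu> \<nu> \<pi>" "c = (\<Sum>a\<in>V. \<Sum>b\<in>V. \<pi> a b * real (graph_dist E a b))"
      by blast
    obtain x where "transport.feasible (marginal_data V \<mu> \<nu>) x" "transport.cost x = c"
      using feasible_of_coupling[OF \<pi>(1)] \<pi>(2) by blast
    then show "c \<in> ?F" by (intro image_eqI[of _ _ x]) auto
  next
    fix c assume "c \<in> ?F"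
    then obtain x where "transport.feasible (marginal_data V \<mu> \<nu>) x" "c = transport.cost x"
      by blast
    then show "c \<in> ?C" using coupling_of_feasible by blast
  qed
  then show ?thesis unfolding wasserstein_def transport.lp_value_def by simp
qed

end

lemma guvab_walk_facts:
  assumes "guvab V E u v \<alpha> \<beta>"
  shows "simple_graph V E" "u \<in> V" "v \<in> V" "0 \<le> \<alpha>" "\<alpha> \<le> 1" "0 \<le> \<beta>" "\<beta> \<le> 1"
  using assms unfolding guvab_def connected_graph_def by auto

lemma walk_product_coupling:
  assumes "guvab V E u v \<alpha> \<beta>"
  shows "coupling V (walk_dist V E \<alpha> u k) (walk_dist V E \<beta> v k)
    (\<lambda>x y. walk_dist V E \<alpha> u k x * walk_dist V E \<beta> v k y)"
  using guvab_walk_facts[OF assms]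
  by (intro coupling_product walk_dist_nonneg walk_dist_sum) auto

lemma W_nonneg:
  assumes "guvab V E u v \<alpha> \<beta>"
  shows "0 \<le> W V E u v \<alpha> \<beta> k"
proof -
  interpret finite_graph_transport V E
    using simple_graph_finite guvab_walk_facts(1)[OF assms] by unfold_locales
  show ?thesis unfolding W_def wasserstein_eq_lp_value
    by (rule transport.lp_value_nonneg[OF feasible_of_coupling(1)[OF walk_product_coupling[OF assms]]])
qed

lemma W_even_eventually_exp_sum:
  assumes "guvab V E u v \<alpha> \<beta>"
  shows "\<exists>s. exp_sum s \<and> eventually (\<lambda>k. W V E u v \<alpha> \<beta> (2 * k) = s k) sequentially"
proof -
  note G = guvab_walk_facts[OF assms]
  interpret finite_graph_transport V E using simple_graph_finite G(1) by unfold_locales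
  define b where "b k = marginal_data V (walk_dist V E \<alpha> u (2 * k)) (walk_dist V E \<beta> v (2 * k))" for k
  have "\<exists>x. transport.feasible (b k) x" for k
    unfolding b_def using feasible_of_coupling(1)[OF walk_product_coupling[OF assms]] by blast
  moreover have "b k \<in> supported_in (V <+> V)" for k
    unfolding b_def marginal_data_def supported_in_def by (auto split: sum.split)
  moreover have "exp_sum (\<lambda>k. b k j)" if "j \<in> V <+> V" for j
    using that G(1-3) walk_dist_even_exp_sum unfolding b_def marginal_data_def by auto
  ultimately obtain s where "exp_sum s" "eventually (\<lambda>k. transport.lp_value (b k) = s k) sequentially"
    using transport.lp_value_eventually_exp_sum by blast
  then show ?thesis unfolding W_def wasserstein_eq_lp_value b_def by blast
qed

theorem theorem6p3:
  fixes V :: "'a set" and E :: "'a \<Rightarrow> 'a \<Rightarrow> bool" and u v :: 'a and \<alpha> \<beta> :: real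
  assumes "guvab V E u v \<alpha> \<beta>"
    and "(\<lambda>k. W V E u v \<alpha> \<beta> k) \<longlonglongrightarrow> 0"
    and "\<not> eventually_constant (\<lambda>k. W V E u v \<alpha> \<beta> (2 * k))"
  shows "\<exists>lam_even c. 0 < lam_even \<and> lam_even < 1 \<and> c > 0 \<and>
           (\<lambda>k. W V E u v \<alpha> \<beta> (2 * k)) \<sim>[at_top] (\<lambda>k. c * lam_even ^ (2 * k))"
proof -
  obtain s where s: "exp_sum s" "eventually (\<lambda>k. W V E u v \<alpha> \<beta> (2 * k) = s k) sequentially"
    using W_even_eventually_exp_sum[OF assms(1)] by blast
  have "(\<lambda>k. W V E u v \<alpha> \<beta> (2 * k)) \<longlonglongrightarrow> 0"
    using LIMSEQ_subseq_LIMSEQ[OF assms(2), of "\<lambda>k. 2 * k"] by (simp add: strict_mono_def o_def)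
  moreover have "\<not> eventually (\<lambda>k. W V E u v \<alpha> \<beta> (2 * k) = 0) sequentially"
  proof
    assume "eventually (\<lambda>k. W V E u v \<alpha> \<beta> (2 * k) = 0) sequentially"
    then obtain N where "\<forall>k\<ge>N. W V E u v \<alpha> \<beta> (2 * k) = 0" unfolding eventually_sequentially ..
    then have "eventually_constant (\<lambda>k. W V E u v \<alpha> \<beta> (2 * k))"
      unfolding eventually_constant_def by (intro exI[of _ N]) simp
    with assms(3) show False ..
  qed
  ultimately obtain m c where mc: "0 < m" "m < 1" "0 < c"
    and "(\<lambda>k. W V E u v \<alpha> \<beta> (2 * k)) \<sim>[at_top] (\<lambda>k. c * m ^ k)"
    using eventually_exp_sum_asymp_equiv[OF s _ W_nonneg[OF assms(1)]] by blast
  moreover have "c * m ^ k = c * sqrt m ^ (2 * k)" for k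
    using mc by (simp add: power_mult)
  ultimately show ?thesis using mc by (intro exI[of _ "sqrt m"] exI[of _ c]) auto
qed
end
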